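(* With $G$, $d$, $G_0$, $X$ and the topology $\tau$ as in the context, the space $(X,\tau)$ is Hausdorff.
   Context: Let $G$ be a Polish group, $d$ a compatible right-invariant metric on $G$ (i.e. $d(g_0h,g_1h)=d(g_0,g_1)$) bounded by $1$, and $G_0$ a countable dense subgroup of $G$. Let $\mathcal L(G,d)$ be the set of functions $f:G\to[0,1]$ with $|f(g_1)-f(g_2)|\le d(g_1,g_2)$ for all $g_1,g_2$. Let $\mathbb Q^{<\mathbb N}$ be the set of finite sequences of rationals; for $s\in\mathbb Q^{<\mathbb N}$ and rationals $a_1,\dots,a_k$, $sa_1\dots a_k$ denotes the sequence $s$ followed by $a_1,\dots,a_k$ (natural numbers are regarded as rationals). Elements of $\mathcal L(G,d)^{\mathbb Q^{<\mathbb N}}$ are families $\vec f=(f_s)_{s\in\mathbb Q^{<\mathbb N}}$, and $G$ acts by $(g\cdot\vec f)_s(g_0)=f_s(g_0g)$. Let $X$ be the set of $\vec f\in\mathcal L(G,d)^{\mathbb Q^{<\mathbb N}}$ such that, writing $t=sq_0q_1q_2\,0\,m\,n$ and $u=sq_0q_1q_2\,1\,m\,n$: (1) for all $s\in\mathbb Q^{<\mathbb N}$, $g_0\in G_0$, $m,n\in\mathbb N$, $q_0,q_1,q_2,\epsilon\in\mathbb Q\cap(0,1)$ with $0<q_i\pm\epsilon<1$ ($i=0,1,2$): $f_t(g_0)<q_1-\epsilon$ or $f_s(g_0)\le q_0+\epsilon$; (2) for the same range of parameters: $f_u(g_0)\ge q_2+\epsilon$ or $f_t(g_0)\ge q_1-\epsilon$;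 (3) for all $s\in\mathbb Q^{<\mathbb N}$, $g_0\in G_0$, $q_0,\epsilon\in\mathbb Q\cap(0,1)$: if $f_s(g_0)<q_0$ then there are $q_1,q_2\in\mathbb Q$, $g_1\in G_0$, $m,n\in\mathbb N$ with $0<q_2<q_1<q_0<1$, $d(g_0,g_1)<\epsilon$, and $f_u(g_1)<q_2$ where $u=sq_0q_1q_2\,1\,m\,n$. The topology $\tau$ on $X$ is the one generated by the subbasis of all sets $\{\vec f\in X: f_s(g_0)<q_0\}$ for $s\in\mathbb Q^{<\mathbb N}$, $g_0\in G_0$, $q_0\in\mathbb Q$. *)

theory Defs
  imports "HOL-Analysis.Analysis" "HOL-Algebra.Group"
begin

definition Polish_group_metric :: "('g, 'b) monoid_scheme \<Rightarrow> ('g \<Rightarrow> 'g \<Rightarrow> real) \<Rightarrow> bool" where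
  "Polish_group_metric G d \<longleftrightarrow>
     group G \<and> Metric_space (carrier G) d \<and>
     completely_metrizable_space (Metric_space.mtopology (carrier G) d) \<and>
     separable_space (Metric_space.mtopology (carrier G) d) \<and>
     continuous_map (prod_topology (Metric_space.mtopology (carrier G) d)
                                   (Metric_space.mtopology (carrier G) d))
                    (Metric_space.mtopology (carrier G) d) (\<lambda>(x, y). x \<otimes>\<^bsub>G\<^esub> y) \<and>
     continuous_map (Metric_space.mtopology (carrier G) d)
                    (Metric_space.mtopology (carrier G) d) (\<lambda>x. inv\<^bsub>G\<^esub> x)"

definition right_invariant_bounded :: "('g, 'b) monoid_scheme \<Rightarrow> ('g \<Rightarrow> 'g \<Rightarrow> real) \<Rightarrow> bool" where
  "right_invariant_bounded G d \<longleftrightarrow>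
     (\<forall>g0\<in>carrier G. \<forall>g1\<in>carrier G. \<forall>h\<in>carrier G.
        d (g0 \<otimes>\<^bsub>G\<^esub> h) (g1 \<otimes>\<^bsub>G\<^esub> h) = d g0 g1) \<and>
     (\<forall>g0\<in>carrier G. \<forall>g1\<in>carrier G. d g0 g1 \<le> 1)"

definition Lip1 :: "('g, 'b) monoid_scheme \<Rightarrow> ('g \<Rightarrow> 'g \<Rightarrow> real) \<Rightarrow> ('g \<Rightarrow> real) set" where
  "Lip1 G d = {f \<in> extensional (carrier G).
      (\<forall>g\<in>carrier G. 0 \<le> f g \<and> f g \<le> 1) \<and>
      (\<forall>g1\<in>carrier G. \<forall>g2\<in>carrier G. \<bar>f g1 - f g2\<bar> \<le> d g1 g2)}"

definition Qunit :: "rat set" where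
  "Qunit = {q. 0 < q \<and> q < 1}"

text \<open>The space X. A family is indexed by finite sequences of rationals (rat list);
  \<open>s a1 ... ak\<close> is \<open>s @ [a1,...,ak]\<close>, with naturals viewed as rationals via of_nat.\<close>
definition Xspace :: "('g, 'b) monoid_scheme \<Rightarrow> ('g \<Rightarrow> 'g \<Rightarrow> real) \<Rightarrow> 'g set
                       \<Rightarrow> (rat list \<Rightarrow> 'g \<Rightarrow> real) set" where
  "Xspace G d G0 = {F. (\<forall>s. F s \<in> Lip1 G d) \<and>
     (\<forall>s. \<forall>g0\<in>G0. \<forall>m n :: nat. \<forall>q0\<in>Qunit. \<forall>q1\<in>Qunit. \<forall>q2\<in>Qunit. \<forall>\<epsilon>\<in>Qunit.
        (\<forall>q\<in>{q0,q1,q2}. 0 < q - \<epsilon> \<and> q - \<epsilon> < 1 \<and> 0 < q + \<epsilon> \<and> q + \<epsilon> < 1) \<longrightarrow>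
        (F (s @ [q0, q1, q2, 0, of_nat m, of_nat n]) g0 < of_rat (q1 - \<epsilon>)
           \<or> F s g0 \<le> of_rat (q0 + \<epsilon>)) \<and>
        (F (s @ [q0, q1, q2, 1, of_nat m, of_nat n]) g0 \<ge> of_rat (q2 + \<epsilon>)
           \<or> F (s @ [q0, q1, q2, 0, of_nat m, of_nat n]) g0 \<ge> of_rat (q1 - \<epsilon>))) \<and>
     (\<forall>s. \<forall>g0\<in>G0. \<forall>q0\<in>Qunit. \<forall>\<epsilon>\<in>Qunit.
        F s g0 < of_rat q0 \<longrightarrow>
        (\<exists>q1 q2 :: rat. \<exists>g1\<in>G0. \<exists>m n :: nat.
           0 < q2 \<and> q2 < q1 \<and> q1 < q0 \<and> q0 < 1 \<and> d g0 g1 < of_rat \<epsilon> \<and>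
           F (s @ [q0, q1, q2, 1, of_nat m, of_nat n]) g1 < of_rat q2))}"

definition tau :: "('g, 'b) monoid_scheme \<Rightarrow> ('g \<Rightarrow> 'g \<Rightarrow> real) \<Rightarrow> 'g set
                    \<Rightarrow> (rat list \<Rightarrow> 'g \<Rightarrow> real) topology" where
  "tau G d G0 = topology_generated_by
     {{F \<in> Xspace G d G0. F s g0 < of_rat q0} | s g0 q0. g0 \<in> G0}"

end

theory Submission
  imports Defs
begin

text \<open>Two distinct points \<open>f \<noteq> f'\<close> of \<open>X\<close> differ in some coordinate \<open>f\<^sub>s\<close>, and since
  the coordinates are 1-Lipschitz and \<open>G\<^sub>0\<close> is dense, already at some \<open>g\<^sub>0 \<in> G\<^sub>0\<close>, say
  \<open>f\<^sub>s(g\<^sub>0) < f'\<^sub>s(g\<^sub>0)\<close>. Choose a rational \<open>q\<^sub>0\<close> slightly above \<open>f\<^sub>s(g\<^sub>0)\<close>. Condition (3) gives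
  \<open>u = s q\<^sub>0 q\<^sub>1 q\<^sub>2 1 m n\<close> and \<open>g\<^sub>1 \<in> G\<^sub>0\<close> close to \<open>g\<^sub>0\<close> with \<open>f\<^sub>u(g\<^sub>1) < q\<^sub>2\<close>. For small \<open>\<epsilon>\<close> still
  \<open>f'\<^sub>s(g\<^sub>1) > q\<^sub>0 + \<epsilon>\<close>, so condition (1) forces \<open>f'\<^sub>t(g\<^sub>1) < q\<^sub>1 - \<epsilon>\<close> for \<open>t = s q\<^sub>0 q\<^sub>1 q\<^sub>2 0 m n\<close>.
  By condition (2) the subbasic sets \<open>{f\<^sub>u(g\<^sub>1) < q\<^sub>2}\<close> and \<open>{f\<^sub>t(g\<^sub>1) < q\<^sub>1 - \<epsilon>}\<close> are disjoint.\<close>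

lemma Xspace_Lip1: "F \<in> Xspace G d G0 \<Longrightarrow> F s \<in> Lip1 G d"
  unfolding Xspace_def by blast

lemma Lip1_dist_bound:
  "f \<in> Lip1 G d \<Longrightarrow> g \<in> carrier G \<Longrightarrow> g' \<in> carrier G \<Longrightarrow> \<bar>f g - f g'\<bar> \<le> d g g'"
  unfolding Lip1_def by blast

lemma Lip1_range: "f \<in> Lip1 G d \<Longrightarrow> g \<in> carrier G \<Longrightarrow> 0 \<le> f g \<and> f g \<le> 1"
  unfolding Lip1_def by blast

lemma Lip1_neq_on_dense:
  assumes M: "Metric_space (carrier G) d"
    and dense: "Metric_space.mtopology (carrier G) d closure_of D = carrier G"
    and f: "f \<in> Lip1 G d" and f': "f' \<in> Lip1 G d" and "f \<noteq> f'"
  shows "\<exists>g0\<in>D. f g0 \<noteq> f' g0"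
proof -
  have "f \<in> extensional (carrier G)" "f' \<in> extensional (carrier G)"
    using f f' unfolding Lip1_def by auto
  then obtain g where g: "g \<in> carrier G" "f g \<noteq> f' g"
    using \<open>f \<noteq> f'\<close> extensionalityI by blast
  define r where "r = \<bar>f g - f' g\<bar> / 2"
  have "r > 0" using g unfolding r_def by simp
  then obtain g0 where g0: "g0 \<in> D" "g0 \<in> carrier G" "d g g0 < r"
    using g dense unfolding Metric_space.metric_closure_of[OF M] Metric_space.in_mball[OF M]
    by blast
  have "f g0 \<noteq> f' g0"
  proof
    assume "f g0 = f' g0"
    then have "\<bar>f g - f' g\<bar> \<le> \<bar>f g - f g0\<bar> + \<bar>f' g - f' g0\<bar>" by linarith
    also have "\<dots> \<le> 2 * d g g0"
      using Lip1_dist_bound[OF f] Lip1_dist_bound[OF f'] g(1) g0(2) by fastforce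
    finally show False using g0(3) unfolding r_def by (simp add: field_simps)
  qed
  then show ?thesis using g0(1) by blast
qed

lemma topspace_tau_subset: "topspace (tau G d G0) \<subseteq> Xspace G d G0"
  unfolding tau_def by auto

lemma openin_tau_subbasic:
  "g0 \<in> G0 \<Longrightarrow> openin (tau G d G0) {F \<in> Xspace G d G0. F s g0 < of_rat q}"
  unfolding tau_def by (rule topology_generated_by_Basis) blast

lemma Xspace_conditions_12:
  fixes s :: "rat list" and q0 q1 q2 e :: rat and m n :: nat
  assumes F: "F \<in> Xspace G d G0" and g: "g \<in> G0"
    and order: "0 < e" "e < q2" "q2 < q1" "q1 < q0" "q0 + e < 1"
  defines "t \<equiv> s @ [q0, q1, q2, 0, of_nat m, of_nat n]"
    and "u \<equiv> s @ [q0, q1, q2, 1, of_nat m, of_nat n]"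
  shows "F t g < of_rat (q1 - e) \<or> F s g \<le> of_rat (q0 + e)"
    and "of_rat (q2 + e) \<le> F u g \<or> of_rat (q1 - e) \<le> F t g"
proof -
  have "q0 \<in> Qunit" "q1 \<in> Qunit" "q2 \<in> Qunit" "e \<in> Qunit"
    and "\<forall>q\<in>{q0,q1,q2}. 0 < q - e \<and> q - e < 1 \<and> 0 < q + e \<and> q + e < 1"
    using order unfolding Qunit_def by auto
  with F g show "F t g < of_rat (q1 - e) \<or> F s g \<le> of_rat (q0 + e)"
    and "of_rat (q2 + e) \<le> F u g \<or> of_rat (q1 - e) \<le> F t g"
    unfolding Xspace_def t_def u_def by blast+
qed

lemma Xspace_condition_3:
  fixes q0 e :: rat
  assumes "F \<in> Xspace G d G0" "g0 \<in> G0" "0 < q0" "q0 < 1" "0 < e" "e < 1"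
    and "F s g0 < of_rat q0"
  shows "\<exists>q1 q2 :: rat. \<exists>g1\<in>G0. \<exists>m n :: nat.
           0 < q2 \<and> q2 < q1 \<and> q1 < q0 \<and> d g0 g1 < of_rat e \<and>
           F (s @ [q0, q1, q2, 1, of_nat m, of_nat n]) g1 < of_rat q2"
proof -
  have "q0 \<in> Qunit" "e \<in> Qunit" using assms unfolding Qunit_def by auto
  with assms show ?thesis unfolding Xspace_def by blast
qed

lemma disjnt_subbasic_pair:
  fixes q0 q1 q2 e :: rat and m n :: nat
  assumes "g \<in> G0" "0 < e" "e < q2" "q2 < q1" "q1 < q0" "q0 + e < 1"
  shows "disjnt {H \<in> Xspace G d G0. H (s @ [q0, q1, q2, 1, of_nat m, of_nat n]) g < of_rat q2}
                {H \<in> Xspace G d G0. H (s @ [q0, q1, q2, 0, of_nat m, of_nat n]) g < of_rat (q1 - e)}"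
proof -
  have "(of_rat q2 :: real) < of_rat (q2 + e)" using \<open>0 < e\<close> by (simp add: of_rat_less)
  with Xspace_conditions_12(2)[OF _ assms, of _ _ d s m n] show ?thesis
    unfolding disjnt_def by force
qed

lemma Xspace_separate_subbasic:
  fixes q0 q1 q2 e :: rat and m n :: nat
  assumes F: "F \<in> Xspace G d G0" and F': "F' \<in> Xspace G d G0" and g: "g \<in> G0"
    and order: "0 < e" "e < q2" "q2 < q1" "q1 < q0" "q0 + e < 1"
    and Fu: "F (s @ [q0, q1, q2, 1, of_nat m, of_nat n]) g < of_rat q2"
    and F's: "of_rat (q0 + e) < F' s g"
  shows "\<exists>U V. openin (tau G d G0) U \<and> openin (tau G d G0) V \<and> F \<in> U \<and> F' \<in> V \<and> disjnt U V"
proof -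
  let ?U = "{H \<in> Xspace G d G0. H (s @ [q0, q1, q2, 1, of_nat m, of_nat n]) g < of_rat q2}"
  let ?V = "{H \<in> Xspace G d G0. H (s @ [q0, q1, q2, 0, of_nat m, of_nat n]) g < of_rat (q1 - e)}"
  have "F' (s @ [q0, q1, q2, 0, of_nat m, of_nat n]) g < of_rat (q1 - e)"
    using Xspace_conditions_12(1)[OF F' g order] F's by fastforce
  then have "F \<in> ?U" "F' \<in> ?V" using F F' Fu by blast+
  moreover have "openin (tau G d G0) ?U" "openin (tau G d G0) ?V"
    by (rule openin_tau_subbasic[OF g])+
  moreover have "disjnt ?U ?V" by (rule disjnt_subbasic_pair[OF g order])
  ultimately show ?thesis by blast
qed

lemma Xspace_separate_lt:
  assumes F: "F \<in> Xspace G d G0" and F': "F' \<in> Xspace G d G0"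
    and G0: "G0 \<subseteq> carrier G" and g0: "g0 \<in> G0" and lt: "F s g0 < F' s g0"
  shows "\<exists>U V. openin (tau G d G0) U \<and> openin (tau G d G0) V \<and> F \<in> U \<and> F' \<in> V \<and> disjnt U V"
proof -
  define a where "a = F s g0"
  define b where "b = F' s g0"
  define \<delta> where "\<delta> = (b - a) / 3"
  have "\<delta> > 0" using lt unfolding a_def b_def \<delta>_def by simp
  have b_eq: "b = a + 3 * \<delta>" unfolding \<delta>_def by (simp add: field_simps)
  have "0 \<le> a" "b \<le> 1"
    using Lip1_range[OF Xspace_Lip1[OF F]] Lip1_range[OF Xspace_Lip1[OF F']] g0 G0
    unfolding a_def b_def by auto
  obtain q0 :: rat where q0: "a < of_rat q0" "of_rat q0 < a + \<delta>"
    using of_rat_dense[of a "a + \<delta>"] \<open>\<delta> > 0\<close> by auto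
  obtain e' :: rat where e': "(0::real) < of_rat e'" "of_rat e' < \<delta>"
    using of_rat_dense[of 0 \<delta>] \<open>\<delta> > 0\<close> by blast
  have "(0::real) < of_rat q0" "of_rat q0 < (1::real)" "of_rat e' < (1::real)"
    using q0 e' \<open>\<delta> > 0\<close> \<open>0 \<le> a\<close> \<open>b \<le> 1\<close> b_eq by linarith+
  then have "0 < q0" "q0 < 1" "0 < e'" "e' < 1"
    using e'(1) by (simp_all add: of_rat_less_1_iff)
  then obtain q1 q2 :: rat and g1 and m n :: nat where
    g1: "g1 \<in> G0" "d g0 g1 < of_rat e'" and order: "0 < q2" "q2 < q1" "q1 < q0"
    and Fu: "F (s @ [q0, q1, q2, 1, of_nat m, of_nat n]) g1 < of_rat q2"
    using Xspace_condition_3[OF F g0] q0(1) unfolding a_def by blast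
  text \<open>\<open>\<epsilon>\<close> is chosen so that \<open>q\<^sub>0 + \<epsilon> < b - d(g\<^sub>0, g\<^sub>1) \<le> f'\<^sub>s(g\<^sub>1)\<close>.\<close>
  obtain e :: rat where e: "(0::real) < of_rat e" "of_rat e < min (of_rat q2) (b - of_rat e' - of_rat q0)"
    using of_rat_dense[of 0 "min (of_rat q2) (b - of_rat e' - of_rat q0)"] q0 e' order b_eq
    by auto
  have "of_rat (q0 + e) < (1::real)"
    using e e'(1) \<open>b \<le> 1\<close> unfolding of_rat_add by linarith
  then have "0 < e" "e < q2" "q0 + e < 1"
    using e by (simp_all add: of_rat_less of_rat_less_1_iff)
  moreover have "\<bar>F' s g0 - F' s g1\<bar> \<le> d g0 g1"
    using Lip1_dist_bound[OF Xspace_Lip1[OF F']] g0 g1(1) G0 by blast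
  then have "of_rat (q0 + e) < F' s g1"
    using e g1(2) unfolding b_def of_rat_add by linarith
  ultimately show ?thesis
    using Xspace_separate_subbasic[OF F F' g1(1) _ _ order(2,3) _ Fu] by blast
qed

theorem lemma2p4:
  fixes G :: "('g, 'b) monoid_scheme" and d :: "'g \<Rightarrow> 'g \<Rightarrow> real" and G0 :: "'g set"
  assumes "Polish_group_metric G d"
    and "right_invariant_bounded G d"
    and "countable G0" and "subgroup G0 G"
    and "Metric_space.mtopology (carrier G) d closure_of G0 = carrier G"
  shows "Hausdorff_space (tau G d G0)"
  unfolding Hausdorff_space_def
proof (intro allI impI, elim conjE)
  fix F F' assume "F \<in> topspace (tau G d G0)" "F' \<in> topspace (tau G d G0)" "F \<noteq> F'"
  then have F: "F \<in> Xspace G d G0" and F': "F' \<in> Xspace G d G0"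
    using topspace_tau_subset by blast+
  have M: "Metric_space (carrier G) d" using assms(1) unfolding Polish_group_metric_def by blast
  have G0: "G0 \<subseteq> carrier G" using assms(4) by (rule subgroup.subset)
  obtain s where "F s \<noteq> F' s" using \<open>F \<noteq> F'\<close> by blast
  then obtain g0 where g0: "g0 \<in> G0" "F s g0 \<noteq> F' s g0"
    using Lip1_neq_on_dense[OF M assms(5) Xspace_Lip1[OF F] Xspace_Lip1[OF F']] by blast
  then consider "F s g0 < F' s g0" | "F' s g0 < F s g0" by linarith
  then show "\<exists>U V. openin (tau G d G0) U \<and> openin (tau G d G0) V \<and> F \<in> U \<and> F' \<in> V \<and> disjnt U V"
  proof cases
    case 1
    then show ?thesis using Xspace_separate_lt[OF F F' G0 g0(1)] by blast
  next
    case 2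
    then show ?thesis using Xspace_separate_lt[OF F' F G0 g0(1)] disjnt_sym by metis
  qed
qed

end
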